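(* Assume $f$ is Lipschitz and satisfies $\mathbf{(AP)_b}$ with $\lambda_1<b<B$. Then $\tilde h(z,t)\to-\infty$ as $|t|\to\infty$, uniformly in $z\in Z$.
   Context: Let $\Omega\subset\mathbb{R}^n$ be a bounded domain with $C^{1,1}$ boundary. Let $Lu=\mathrm{tr}(A(x)D^2u)+b(x)\cdot\nabla u+c(x)u$, where $A\in C(\overline\Omega)$ is symmetric-matrix valued with eigenvalues in $[\lambda,\Lambda]$, $\Lambda\ge\lambda>0$, and $|b|,|c|\le\Lambda$. Fix $p\ge n$, $X=\{u\in W^{2,p}(\Omega):u=0\text{ on }\partial\Omega\}$, $Y=L^p(\Omega)$. $\lambda_1=\sup\{\mu:\exists\,\phi\in W^{2,n}_{\rm loc}(\Omega),\phi>0,(L+\mu)\phi\le0\}$ is the principal (simple) Dirichlet eigenvalue of $-L$ with eigenfunction $\phi_1\in X$, $\phi_1>0$; the adjoint $L^*$ has the same principal eigenvalue with positive eigenfunction $\phi_1^*$; $\langle g,h\rangle=\int_\Omega gh$. $Z=\{g\in Y:\langle g,\phi_1^*\rangle=0\}$, $W=Z\cap X$; $P:Y=Z\oplus\mathbb{R}\phi_1\to Z$, $P(z+s\phi_1)=z$. $F(u)=-Lu-f(u)$. Condition $\mathbf{(AP)_b}$ (lower slope normalized to $a=0$, so $0<\lambda_1<b$): $0\le\frac{f(x)-f(y)}{x-y}\le b$ for $x\ne y$, and for some $M\ge0$, $f(s)\ge\max\{bs-M,-M\}$ for all $s$. $B=B(L,\Omega)>\lambda_1$ is a constant (depending only on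 $L,\Omega$) for which, whenever $\lambda_1<b<B$, the map $\Psi:X\to Y$, $\Psi(w+t\phi_1)=PF(w+t\phi_1)+t\phi_1$ ($w\in W$, $t\in\mathbb{R}$), is a bi-Lipschitz homeomorphism. The height function is $\tilde h(z,t)=\langle F(\Psi^{-1}(z+t\phi_1)),\phi_1^*\rangle/\langle\phi_1,\phi_1^*\rangle$ for $z\in Z$, $t\in\mathbb{R}$. *)

theory Defs
  imports "HOL-Analysis.Analysis"
begin

text \<open>Near every boundary point, after choosing a unit direction nu, the domain is the
  supergraph of a C^{1,1} function gamma over the hyperplane orthogonal to nu
  (gamma is evaluated only at the orthogonal projection onto that hyperplane).\<close>

definition C11_boundary :: "(real^'n) set \<Rightarrow> bool" where
  "C11_boundary \<Omega> \<longleftrightarrow>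
    (\<forall>x0\<in>frontier \<Omega>. \<exists>r>0. \<exists>\<nu> \<gamma> \<gamma>'.
       norm \<nu> = 1 \<and>
       (\<forall>y. (\<gamma> has_derivative \<gamma>' y) (at y)) \<and>
       (\<exists>K. \<forall>y z. onorm (\<lambda>v. \<gamma>' y v - \<gamma>' z v) \<le> K * dist y z) \<and>
       \<Omega> \<inter> ball x0 r = {y \<in> ball x0 r. y \<bullet> \<nu> > \<gamma> (y - (y \<bullet> \<nu>) *\<^sub>R \<nu>)})"

section \<open>Lebesgue and Sobolev spaces (functions are representatives)\<close>

definition pd :: "(real^'n \<Rightarrow> real) \<Rightarrow> 'n \<Rightarrow> real^'n \<Rightarrow> real" where
  "pd \<phi> i x = frechet_derivative \<phi> (at x) (axis i 1)"

definition test_fun :: "(real^'n) set \<Rightarrow> (real^'n \<Rightarrow> real) \<Rightarrow> bool" where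
  "test_fun \<Omega> \<phi> \<longleftrightarrow> (\<forall>x. \<phi> differentiable (at x)) \<and> (\<forall>i. continuous_on UNIV (pd \<phi> i)) \<and>
     (\<exists>K. compact K \<and> K \<subseteq> \<Omega> \<and> (\<forall>x. x \<notin> K \<longrightarrow> \<phi> x = 0))"

definition loc_int :: "(real^'n) set \<Rightarrow> (real^'n \<Rightarrow> real) \<Rightarrow> bool" where
  "loc_int \<Omega> u \<longleftrightarrow> (\<forall>K. compact K \<and> K \<subseteq> \<Omega> \<longrightarrow> set_integrable lebesgue K u)"

definition weak_pd :: "(real^'n) set \<Rightarrow> (real^'n \<Rightarrow> real) \<Rightarrow> 'n \<Rightarrow> (real^'n \<Rightarrow> real) \<Rightarrow> bool" where
  "weak_pd \<Omega> u i v \<longleftrightarrow> loc_int \<Omega> u \<and> loc_int \<Omega> v \<and>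
     (\<forall>\<phi>. test_fun \<Omega> \<phi> \<longrightarrow>
        (\<integral>x. u x * pd \<phi> i x \<partial>lebesgue_on \<Omega>) = - (\<integral>x. v x * \<phi> x \<partial>lebesgue_on \<Omega>))"

definition Lp :: "(real^'n) set \<Rightarrow> real \<Rightarrow> (real^'n \<Rightarrow> real) \<Rightarrow> bool" where
  "Lp \<Omega> p u \<longleftrightarrow> u \<in> borel_measurable (lebesgue_on \<Omega>) \<and>
     integrable (lebesgue_on \<Omega>) (\<lambda>x. \<bar>u x\<bar> powr p)"

definition Lp_norm :: "(real^'n) set \<Rightarrow> real \<Rightarrow> (real^'n \<Rightarrow> real) \<Rightarrow> real" where
  "Lp_norm \<Omega> p u = (\<integral>x. \<bar>u x\<bar> powr p \<partial>lebesgue_on \<Omega>) powr (1 / p)"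

definition grad_w :: "(real^'n) set \<Rightarrow> (real^'n \<Rightarrow> real) \<Rightarrow> 'n \<Rightarrow> real^'n \<Rightarrow> real" where
  "grad_w \<Omega> u = (SOME Du. \<forall>i. weak_pd \<Omega> u i (Du i))"

definition hess_w :: "(real^'n) set \<Rightarrow> (real^'n \<Rightarrow> real) \<Rightarrow> 'n \<Rightarrow> 'n \<Rightarrow> real^'n \<Rightarrow> real" where
  "hess_w \<Omega> u = (SOME D2u. \<forall>i j. weak_pd \<Omega> (grad_w \<Omega> u i) j (D2u i j))"

definition W2p :: "(real^'n) set \<Rightarrow> real \<Rightarrow> (real^'n \<Rightarrow> real) \<Rightarrow> bool" where
  "W2p \<Omega> p u \<longleftrightarrow> Lp \<Omega> p u \<and>
     (\<exists>Du D2u. \<forall>i. weak_pd \<Omega> u i (Du i) \<and> Lp \<Omega> p (Du i) \<and>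
        (\<forall>j. weak_pd \<Omega> (Du i) j (D2u i j) \<and> Lp \<Omega> p (D2u i j)))"

definition W2p_loc :: "(real^'n) set \<Rightarrow> real \<Rightarrow> (real^'n \<Rightarrow> real) \<Rightarrow> bool" where
  "W2p_loc \<Omega> p u \<longleftrightarrow>
     (\<exists>Du D2u. \<forall>i. weak_pd \<Omega> u i (Du i) \<and> (\<forall>j. weak_pd \<Omega> (Du i) j (D2u i j))) \<and>
     (\<forall>K. compact K \<and> K \<subseteq> \<Omega> \<longrightarrow> Lp K p u \<and>
        (\<forall>i. Lp K p (grad_w \<Omega> u i) \<and> (\<forall>j. Lp K p (hess_w \<Omega> u i j))))"

definition W2p_norm :: "(real^'n) set \<Rightarrow> real \<Rightarrow> (real^'n \<Rightarrow> real) \<Rightarrow> real" where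
  "W2p_norm \<Omega> p u = Lp_norm \<Omega> p u + (\<Sum>i\<in>UNIV. Lp_norm \<Omega> p (grad_w \<Omega> u i))
     + (\<Sum>i\<in>UNIV. \<Sum>j\<in>UNIV. Lp_norm \<Omega> p (hess_w \<Omega> u i j))"

text \<open>Zero boundary values: u lies in W^{1,p}_0, the closure of the test functions in W^{1,p}.\<close>
definition W1p0 :: "(real^'n) set \<Rightarrow> real \<Rightarrow> (real^'n \<Rightarrow> real) \<Rightarrow> bool" where
  "W1p0 \<Omega> p u \<longleftrightarrow> (\<exists>\<phi>s. (\<forall>k. test_fun \<Omega> (\<phi>s k)) \<and>
     (\<lambda>k. Lp_norm \<Omega> p (\<lambda>x. \<phi>s k x - u x)
          + (\<Sum>i\<in>UNIV. Lp_norm \<Omega> p (\<lambda>x. pd (\<phi>s k) i x - grad_w \<Omega> u i x))) \<longlonglongrightarrow> 0)"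

definition Xsp :: "(real^'n) set \<Rightarrow> real \<Rightarrow> (real^'n \<Rightarrow> real) set" where
  "Xsp \<Omega> p = {u. W2p \<Omega> p u \<and> W1p0 \<Omega> p u}"

definition Lop :: "(real^'n \<Rightarrow> real^'n^'n) \<Rightarrow> (real^'n \<Rightarrow> real^'n) \<Rightarrow> (real^'n \<Rightarrow> real)
    \<Rightarrow> (real^'n) set \<Rightarrow> (real^'n \<Rightarrow> real) \<Rightarrow> real^'n \<Rightarrow> real" where
  "Lop A b c \<Omega> u x = (\<Sum>i\<in>UNIV. \<Sum>j\<in>UNIV. A x $ i $ j * hess_w \<Omega> u i j x)
       + (\<Sum>i\<in>UNIV. b x $ i * grad_w \<Omega> u i x) + c x * u x"

definition principal_eig :: "(real^'n \<Rightarrow> real^'n^'n) \<Rightarrow> (real^'n \<Rightarrow> real^'n) \<Rightarrow> (real^'n \<Rightarrow> real)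
    \<Rightarrow> (real^'n) set \<Rightarrow> real" where
  "principal_eig A b c \<Omega> = Sup {\<mu>. \<exists>\<phi>. W2p_loc \<Omega> (real CARD('n)) \<phi> \<and> continuous_on \<Omega> \<phi> \<and>
       (\<forall>x\<in>\<Omega>. \<phi> x > 0) \<and>
       (AE x in lebesgue_on \<Omega>. Lop A b c \<Omega> \<phi> x + \<mu> * \<phi> x \<le> 0)}"

definition pair :: "(real^'n) set \<Rightarrow> (real^'n \<Rightarrow> real) \<Rightarrow> (real^'n \<Rightarrow> real) \<Rightarrow> real" where
  "pair \<Omega> g h = (\<integral>x. g x * h x \<partial>lebesgue_on \<Omega>)"

text \<open>Condition (AP)_b with lower slope a = 0.\<close>
definition AP_cond :: "real \<Rightarrow> (real \<Rightarrow> real) \<Rightarrow> bool" where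
  "AP_cond b f \<longleftrightarrow> (\<forall>x y. x \<noteq> y \<longrightarrow> 0 \<le> (f x - f y) / (x - y) \<and> (f x - f y) / (x - y) \<le> b) \<and>
     (\<exists>M\<ge>0. \<forall>s. f s \<ge> max (b * s - M) (- M))"

definition Fop :: "(real^'n \<Rightarrow> real^'n^'n) \<Rightarrow> (real^'n \<Rightarrow> real^'n) \<Rightarrow> (real^'n \<Rightarrow> real)
    \<Rightarrow> (real^'n) set \<Rightarrow> (real \<Rightarrow> real) \<Rightarrow> (real^'n \<Rightarrow> real) \<Rightarrow> real^'n \<Rightarrow> real" where
  "Fop A b c \<Omega> f u = (\<lambda>x. - Lop A b c \<Omega> u x - f (u x))"

text \<open>Coefficient of phi1 in the decomposition Y = Z (+) R phi1 (also X = W (+) R phi1).\<close>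
definition coef :: "(real^'n) set \<Rightarrow> (real^'n \<Rightarrow> real) \<Rightarrow> (real^'n \<Rightarrow> real) \<Rightarrow> (real^'n \<Rightarrow> real) \<Rightarrow> real" where
  "coef \<Omega> \<phi>1 \<phi>1s g = pair \<Omega> g \<phi>1s / pair \<Omega> \<phi>1 \<phi>1s"

definition Pproj :: "(real^'n) set \<Rightarrow> (real^'n \<Rightarrow> real) \<Rightarrow> (real^'n \<Rightarrow> real) \<Rightarrow> (real^'n \<Rightarrow> real) \<Rightarrow> real^'n \<Rightarrow> real" where
  "Pproj \<Omega> \<phi>1 \<phi>1s g = (\<lambda>x. g x - coef \<Omega> \<phi>1 \<phi>1s g * \<phi>1 x)"

text \<open>Psi(w + t phi1) = P F(w + t phi1) + t phi1, where t = coef u.\<close>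
definition Psi :: "(real^'n \<Rightarrow> real^'n^'n) \<Rightarrow> (real^'n \<Rightarrow> real^'n) \<Rightarrow> (real^'n \<Rightarrow> real)
    \<Rightarrow> (real^'n) set \<Rightarrow> (real \<Rightarrow> real) \<Rightarrow> (real^'n \<Rightarrow> real) \<Rightarrow> (real^'n \<Rightarrow> real)
    \<Rightarrow> (real^'n \<Rightarrow> real) \<Rightarrow> real^'n \<Rightarrow> real" where
  "Psi A b c \<Omega> f \<phi>1 \<phi>1s u =
     (\<lambda>x. Pproj \<Omega> \<phi>1 \<phi>1s (Fop A b c \<Omega> f u) x + coef \<Omega> \<phi>1 \<phi>1s u * \<phi>1 x)"

text \<open>Bi-Lipschitz homeomorphism from X (W^{2,p}-norm) onto Y = L^p (functions modulo a.e.).\<close>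
definition bilip_homeo :: "(real^'n) set \<Rightarrow> real \<Rightarrow> ((real^'n \<Rightarrow> real) \<Rightarrow> real^'n \<Rightarrow> real) \<Rightarrow> bool" where
  "bilip_homeo \<Omega> p \<Psi> \<longleftrightarrow>
     (\<forall>u\<in>Xsp \<Omega> p. Lp \<Omega> p (\<Psi> u)) \<and>
     (\<exists>k K. 0 < k \<and> (\<forall>u\<in>Xsp \<Omega> p. \<forall>v\<in>Xsp \<Omega> p.
         k * W2p_norm \<Omega> p (\<lambda>x. u x - v x) \<le> Lp_norm \<Omega> p (\<lambda>x. \<Psi> u x - \<Psi> v x) \<and>
         Lp_norm \<Omega> p (\<lambda>x. \<Psi> u x - \<Psi> v x) \<le> K * W2p_norm \<Omega> p (\<lambda>x. u x - v x))) \<and>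
     (\<forall>g. Lp \<Omega> p g \<longrightarrow> (\<exists>u\<in>Xsp \<Omega> p. AE x in lebesgue_on \<Omega>. \<Psi> u x = g x))"

definition Psi_inv :: "(real^'n) set \<Rightarrow> real \<Rightarrow> ((real^'n \<Rightarrow> real) \<Rightarrow> real^'n \<Rightarrow> real)
    \<Rightarrow> (real^'n \<Rightarrow> real) \<Rightarrow> real^'n \<Rightarrow> real" where
  "Psi_inv \<Omega> p \<Psi> g = (SOME u. u \<in> Xsp \<Omega> p \<and> (AE x in lebesgue_on \<Omega>. \<Psi> u x = g x))"

definition htilde :: "(real^'n \<Rightarrow> real^'n^'n) \<Rightarrow> (real^'n \<Rightarrow> real^'n) \<Rightarrow> (real^'n \<Rightarrow> real)
    \<Rightarrow> (real^'n) set \<Rightarrow> real \<Rightarrow> (real \<Rightarrow> real) \<Rightarrow> (real^'n \<Rightarrow> real) \<Rightarrow> (real^'n \<Rightarrow> real)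
    \<Rightarrow> (real^'n \<Rightarrow> real) \<Rightarrow> real \<Rightarrow> real" where
  "htilde A b c \<Omega> p f \<phi>1 \<phi>1s z t =
     pair \<Omega> (Fop A b c \<Omega> f (Psi_inv \<Omega> p (Psi A b c \<Omega> f \<phi>1 \<phi>1s) (\<lambda>x. z x + t * \<phi>1 x))) \<phi>1s
       / pair \<Omega> \<phi>1 \<phi>1s"

definition Zsp :: "(real^'n) set \<Rightarrow> real \<Rightarrow> (real^'n \<Rightarrow> real) \<Rightarrow> (real^'n \<Rightarrow> real) set" where
  "Zsp \<Omega> p \<phi>1s = {g. Lp \<Omega> p g \<and> pair \<Omega> g \<phi>1s = 0}"

end

theory Submission
  imports Defs
begin

text \<open>Since \<open>\<Psi>\<close> only changes the \<open>Z\<close>-component, \<open>u = \<Psi>\<^sup>-\<^sup>1(z + t \<phi>\<^sub>1)\<close> has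
  \<open>\<langle>u, \<phi>\<^sub>1\<^sup>*\<rangle> = t \<langle>\<phi>\<^sub>1, \<phi>\<^sub>1\<^sup>*\<rangle>\<close>. Pairing \<open>F(u) = -Lu - f(u)\<close> with the adjoint eigenfunction
  gives \<open>\<langle>F(u), \<phi>\<^sub>1\<^sup>*\<rangle> = \<lambda>\<^sub>1 \<langle>u, \<phi>\<^sub>1\<^sup>*\<rangle> - \<langle>f(u), \<phi>\<^sub>1\<^sup>*\<rangle>\<close>, and the two lower bounds
  \<open>f(s) \<ge> b s - M\<close>, \<open>f(s) \<ge> -M\<close> of \<open>(AP)\<^sub>b\<close> yield
  \<open>h(z,t) \<le> \<lambda>\<^sub>1 t - b max(t, 0) + C\<close> with \<open>C\<close> independent of \<open>z\<close>.
  As \<open>0 < \<lambda>\<^sub>1 < b\<close>, the right-hand side tends to \<open>-\<infinity>\<close> for \<open>t \<rightarrow> \<plusminus>\<infinity>\<close>.\<close>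

lemma Lp_add:
  assumes "Lp S p g" "Lp S p h" "0 < p"
  shows "Lp S p (\<lambda>x. g x + h x)"
proof -
  have mg: "g \<in> borel_measurable (lebesgue_on S)" and mh: "h \<in> borel_measurable (lebesgue_on S)"
    and ig: "integrable (lebesgue_on S) (\<lambda>x. \<bar>g x\<bar> powr p)"
    and ih: "integrable (lebesgue_on S) (\<lambda>x. \<bar>h x\<bar> powr p)"
    using assms unfolding Lp_def by auto
  have bound: "\<bar>g x + h x\<bar> powr p \<le> 2 powr p * (\<bar>g x\<bar> powr p + \<bar>h x\<bar> powr p)" for x
  proof -
    have "\<bar>g x + h x\<bar> powr p \<le> (2 * max \<bar>g x\<bar> \<bar>h x\<bar>) powr p"
      using assms(3) by (intro powr_mono2) auto
    also have "\<dots> = 2 powr p * max \<bar>g x\<bar> \<bar>h x\<bar> powr p"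
      by (simp add: powr_mult)
    also have "max \<bar>g x\<bar> \<bar>h x\<bar> powr p \<le> \<bar>g x\<bar> powr p + \<bar>h x\<bar> powr p"
      by (cases "\<bar>g x\<bar> \<le> \<bar>h x\<bar>") (auto simp: max_def)
    finally show ?thesis by (simp add: mult_left_mono)
  qed
  have "integrable (lebesgue_on S) (\<lambda>x. \<bar>g x + h x\<bar> powr p)"
  proof (rule Bochner_Integration.integrable_bound)
    show "integrable (lebesgue_on S) (\<lambda>x. 2 powr p * (\<bar>g x\<bar> powr p + \<bar>h x\<bar> powr p))"
      using ig ih by auto
    show "(\<lambda>x. \<bar>g x + h x\<bar> powr p) \<in> borel_measurable (lebesgue_on S)"
      using mg mh by measurable
    show "AE x in lebesgue_on S. norm (\<bar>g x + h x\<bar> powr p)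
        \<le> norm (2 powr p * (\<bar>g x\<bar> powr p + \<bar>h x\<bar> powr p))"
      using bound by (intro AE_I2) simp
  qed
  then show ?thesis using mg mh unfolding Lp_def by auto
qed

lemma Lp_cmult:
  assumes "Lp S p h"
  shows "Lp S p (\<lambda>x. t * h x)"
proof -
  have "(\<lambda>x. \<bar>t * h x\<bar> powr p) = (\<lambda>x. \<bar>t\<bar> powr p * \<bar>h x\<bar> powr p)"
    by (simp add: abs_mult powr_mult)
  then show ?thesis using assms unfolding Lp_def by auto
qed

lemma Lp_const:
  assumes "S \<in> lmeasurable"
  shows "Lp S p (\<lambda>x. k)"
  using finite_measure.integrable_const[OF finite_measure_lebesgue_on[OF assms]]
  unfolding Lp_def by simp

lemma AP_cond_mono:
  assumes "AP_cond b f"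
  shows "mono f"
proof (rule monoI)
  fix x y :: real
  assume "x \<le> y"
  show "f x \<le> f y"
  proof (cases "x = y")
    case False
    then have "0 \<le> (f y - f x) / (y - x)" using assms unfolding AP_cond_def by metis
    then show ?thesis using \<open>x \<le> y\<close> False by (simp add: zero_le_divide_iff)
  qed simp
qed

lemma AP_cond_abs_diff_le:
  assumes "AP_cond b f"
  shows "\<bar>f x - f y\<bar> \<le> b * \<bar>x - y\<bar>"
proof (cases "x = y")
  case False
  then have "0 \<le> (f x - f y) / (x - y)" "(f x - f y) / (x - y) \<le> b"
    using assms unfolding AP_cond_def by blast+
  then have "\<bar>f x - f y\<bar> / \<bar>x - y\<bar> \<le> b" by (metis abs_divide abs_of_nonneg)
  then show ?thesis using False by (simp add: divide_le_eq)
qed simp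

lemma AP_cond_nonneg:
  assumes "AP_cond b f"
  shows "0 \<le> b"
  using AP_cond_abs_diff_le[OF assms, of 1 0] abs_ge_zero[of "f 1 - f 0"] by simp

lemma pair_pos:
  assumes "open S" "S \<noteq> {}" "S \<in> lmeasurable"
    and "\<forall>x\<in>S. g x > 0" "AE x in lebesgue_on S. w x > 0"
    and "integrable (lebesgue_on S) (\<lambda>x. g x * w x)"
  shows "pair S g w > 0"
proof -
  obtain x e where "e > 0" "ball x e \<subseteq> S"
    using assms(1,2) open_contains_ball by blast
  then have "emeasure lebesgue (ball x e) \<le> emeasure lebesgue S"
    using assms(3) by (intro emeasure_mono) auto
  moreover have "emeasure lebesgue (ball x e) > 0"
    using content_ball_pos[OF \<open>e > 0\<close>, of x] emeasure_lborel_ball_finite[of x e]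
    by (simp add: measure_def enn2real_positive_iff)
  ultimately have "emeasure (lebesgue_on S) (space (lebesgue_on S)) \<noteq> 0"
    using assms(3) by (auto simp: emeasure_restrict_space fmeasurable_def)
  moreover have "AE x in lebesgue_on S. 0 < g x * w x"
    using assms(5) AE_space[of "lebesgue_on S"] by eventually_elim (use assms(4) in auto)
  ultimately have "integral\<^sup>L (lebesgue_on S) (\<lambda>x. 0) < integral\<^sup>L (lebesgue_on S) (\<lambda>x. g x * w x)"
    using assms(6)
    by (intro finite_measure.integral_less_AE_space[OF finite_measure_lebesgue_on[OF assms(3)]]) auto
  then show ?thesis unfolding pair_def by simp
qed

lemma pair_mono_AE:
  assumes "AE x in lebesgue_on S. g x \<le> h x" "AE x in lebesgue_on S. 0 \<le> w x"
    and "integrable (lebesgue_on S) (\<lambda>x. g x * w x)" "integrable (lebesgue_on S) (\<lambda>x. h x * w x)"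
  shows "pair S g w \<le> pair S h w"
  unfolding pair_def using assms(3,4)
proof (rule integral_mono_AE)
  show "AE x in lebesgue_on S. g x * w x \<le> h x * w x"
    using assms(1,2) by eventually_elim (simp add: mult_right_mono)
qed

lemma bilip_homeo_Psi_inv:
  assumes "bilip_homeo S p \<Psi>" "Lp S p g"
  shows "Psi_inv S p \<Psi> g \<in> Xsp S p \<and> (AE x in lebesgue_on S. \<Psi> (Psi_inv S p \<Psi> g) x = g x)"
proof -
  obtain u where "u \<in> Xsp S p" "AE x in lebesgue_on S. \<Psi> u x = g x"
    using assms unfolding bilip_homeo_def by blast
  then show ?thesis unfolding Psi_inv_def by (rule someI[of _ u, OF conjI])
qed

lemma Psi_eq:
  "Psi A bv c S f \<phi> \<phi>s u x
     = Fop A bv c S f u x + (coef S \<phi> \<phi>s u - coef S \<phi> \<phi>s (Fop A bv c S f u)) * \<phi> x"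
  unfolding Psi_def Pproj_def by (simp add: algebra_simps)

lemma integrable_Fop_mult:
  assumes "integrable (lebesgue_on S) (\<lambda>x. Psi A bv c S f \<phi> \<phi>s u x * \<phi>s x)"
    and "integrable (lebesgue_on S) (\<lambda>x. \<phi> x * \<phi>s x)"
  shows "integrable (lebesgue_on S) (\<lambda>x. Fop A bv c S f u x * \<phi>s x)"
proof -
  define d where "d = coef S \<phi> \<phi>s u - coef S \<phi> \<phi>s (Fop A bv c S f u)"
  have "(\<lambda>x. Fop A bv c S f u x * \<phi>s x)
      = (\<lambda>x. Psi A bv c S f \<phi> \<phi>s u x * \<phi>s x - d * (\<phi> x * \<phi>s x))"
    unfolding Psi_eq d_def by (simp add: algebra_simps)
  then show ?thesis using assms by simp
qed

lemma pair_Psi: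
  assumes "integrable (lebesgue_on S) (\<lambda>x. Psi A bv c S f \<phi> \<phi>s u x * \<phi>s x)"
    and "integrable (lebesgue_on S) (\<lambda>x. \<phi> x * \<phi>s x)" "pair S \<phi> \<phi>s \<noteq> 0"
  shows "pair S (Psi A bv c S f \<phi> \<phi>s u) \<phi>s = pair S u \<phi>s"
proof -
  define d where "d = coef S \<phi> \<phi>s u - coef S \<phi> \<phi>s (Fop A bv c S f u)"
  have "(\<lambda>x. Psi A bv c S f \<phi> \<phi>s u x * \<phi>s x)
      = (\<lambda>x. Fop A bv c S f u x * \<phi>s x + d * (\<phi> x * \<phi>s x))"
    unfolding Psi_eq d_def by (simp add: algebra_simps)
  then have "pair S (Psi A bv c S f \<phi> \<phi>s u) \<phi>s = pair S (Fop A bv c S f u) \<phi>s + d * pair S \<phi> \<phi>s"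
    using integrable_Fop_mult[OF assms(1,2)] assms(2) unfolding pair_def by simp
  then show ?thesis using assms(3) unfolding d_def coef_def by (simp add: field_simps)
qed

lemma pair_Fop:
  assumes "pair S (\<lambda>x. Lop A bv c S u x + l * u x) w = 0"
    and "integrable (lebesgue_on S) (\<lambda>x. Fop A bv c S f u x * w x)"
    and "integrable (lebesgue_on S) (\<lambda>x. f (u x) * w x)"
    and "integrable (lebesgue_on S) (\<lambda>x. u x * w x)"
  shows "pair S (Fop A bv c S f u) w = l * pair S u w - pair S (\<lambda>x. f (u x)) w"
proof -
  have "(\<lambda>x. (Lop A bv c S u x + l * u x) * w x)
      = (\<lambda>x. l * (u x * w x) - Fop A bv c S f u x * w x - f (u x) * w x)"
    unfolding Fop_def by (simp add: algebra_simps)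
  then show ?thesis using assms unfolding pair_def by simp
qed

lemma integrable_AP_comp_mult:
  assumes "AP_cond b f" "u \<in> borel_measurable (lebesgue_on S)"
    and "integrable (lebesgue_on S) w" "integrable (lebesgue_on S) (\<lambda>x. u x * w x)"
  shows "integrable (lebesgue_on S) (\<lambda>x. f (u x) * w x)"
proof (rule Bochner_Integration.integrable_bound)
  show "integrable (lebesgue_on S) (\<lambda>x. \<bar>f 0\<bar> * \<bar>w x\<bar> + b * \<bar>u x * w x\<bar>)"
    using assms(3,4) by auto
  have "(\<lambda>x. f (u x)) \<in> borel_measurable (lebesgue_on S)"
    using measurable_compose[OF assms(2) borel_measurable_mono[OF AP_cond_mono[OF assms(1)]]]
    by (simp add: o_def)
  then show "(\<lambda>x. f (u x) * w x) \<in> borel_measurable (lebesgue_on S)"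
    using borel_measurable_integrable[OF assms(3)] by (rule borel_measurable_times)
  show "AE x in lebesgue_on S. norm (f (u x) * w x) \<le> norm (\<bar>f 0\<bar> * \<bar>w x\<bar> + b * \<bar>u x * w x\<bar>)"
  proof (intro AE_I2)
    fix x
    have "\<bar>f (u x)\<bar> * \<bar>w x\<bar> \<le> (\<bar>f 0\<bar> + b * \<bar>u x\<bar>) * \<bar>w x\<bar>"
      using AP_cond_abs_diff_le[OF assms(1), of "u x" 0] by (intro mult_right_mono) auto
    then show "norm (f (u x) * w x) \<le> norm (\<bar>f 0\<bar> * \<bar>w x\<bar> + b * \<bar>u x * w x\<bar>)"
      using AP_cond_nonneg[OF assms(1)] by (simp add: abs_mult algebra_simps)
  qed
qed

lemma pair_AP_comp_lower:
  assumes "AP_cond b f" "\<And>s. b * s - M \<le> f s" "\<And>s. - M \<le> f s"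
    and "AE x in lebesgue_on S. 0 \<le> w x" "integrable (lebesgue_on S) w"
    and "integrable (lebesgue_on S) (\<lambda>x. u x * w x)"
    and "integrable (lebesgue_on S) (\<lambda>x. f (u x) * w x)"
  shows "b * max (pair S u w) 0 - M * integral\<^sup>L (lebesgue_on S) w \<le> pair S (\<lambda>x. f (u x)) w"
proof -
  have "pair S (\<lambda>x. b * u x - M) w \<le> pair S (\<lambda>x. f (u x)) w"
    using assms(4-7) by (intro pair_mono_AE[OF AE_I2] assms(2)) (auto simp: algebra_simps)
  moreover have "pair S (\<lambda>x. b * u x - M) w = b * pair S u w - M * integral\<^sup>L (lebesgue_on S) w"
    using assms(5,6) unfolding pair_def by (simp add: algebra_simps)
  moreover have "pair S (\<lambda>x. - M) w \<le> pair S (\<lambda>x. f (u x)) w"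
    using assms(3-5,7) by (intro pair_mono_AE) auto
  moreover have "pair S (\<lambda>x. - M) w = - M * integral\<^sup>L (lebesgue_on S) w"
    unfolding pair_def by simp
  ultimately show ?thesis
    using AP_cond_nonneg[OF assms(1)] by (cases "pair S u w \<ge> 0") auto
qed

lemma htilde_le:
  fixes S :: "(real^'n) set"
  assumes "bilip_homeo S p (Psi A bv c S f \<phi> \<phi>s)" "0 < p" "Lp S p \<phi>"
    and Lp_pair: "\<forall>g. Lp S p g \<longrightarrow> integrable (lebesgue_on S) (\<lambda>x. g x * \<phi>s x)"
    and adjoint: "\<forall>u\<in>Xsp S p. pair S (\<lambda>x. Lop A bv c S u x + l * u x) \<phi>s = 0"
    and "pair S \<phi> \<phi>s > 0" "AE x in lebesgue_on S. 0 \<le> \<phi>s x" "integrable (lebesgue_on S) \<phi>s"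
    and AP: "AP_cond b f" "\<And>s. b * s - M \<le> f s" "\<And>s. - M \<le> f s"
    and "z \<in> Zsp S p \<phi>s"
  shows "htilde A bv c S p f \<phi> \<phi>s z t
    \<le> l * t - b * max t 0 + M * integral\<^sup>L (lebesgue_on S) \<phi>s / pair S \<phi> \<phi>s"
proof -
  let ?\<Psi> = "Psi A bv c S f \<phi> \<phi>s"
  define P where "P = pair S \<phi> \<phi>s"
  define g where "g = (\<lambda>x. z x + t * \<phi> x)"
  define u where "u = Psi_inv S p ?\<Psi> g"
  have "Lp S p z" "pair S z \<phi>s = 0" using \<open>z \<in> Zsp S p \<phi>s\<close> unfolding Zsp_def by auto
  then have "Lp S p g" unfolding g_def using Lp_add Lp_cmult assms(2,3) by blast
  then have u: "u \<in> Xsp S p" "AE x in lebesgue_on S. ?\<Psi> u x = g x"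
    using bilip_homeo_Psi_inv[OF assms(1)] unfolding u_def by auto
  have "Lp S p u" using u(1) unfolding Xsp_def W2p_def by auto
  moreover have "Lp S p (?\<Psi> u)" using assms(1) u(1) unfolding bilip_homeo_def by blast
  ultimately have int_u: "integrable (lebesgue_on S) (\<lambda>x. u x * \<phi>s x)"
    and int_\<Psi>u: "integrable (lebesgue_on S) (\<lambda>x. ?\<Psi> u x * \<phi>s x)"
    and int_\<phi>: "integrable (lebesgue_on S) (\<lambda>x. \<phi> x * \<phi>s x)"
    and int_g: "integrable (lebesgue_on S) (\<lambda>x. g x * \<phi>s x)"
    and int_z: "integrable (lebesgue_on S) (\<lambda>x. z x * \<phi>s x)"
    using Lp_pair \<open>Lp S p g\<close> \<open>Lp S p z\<close> assms(3) by auto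
  have "pair S u \<phi>s = pair S (?\<Psi> u) \<phi>s"
    using pair_Psi[OF int_\<Psi>u int_\<phi>] assms(6) by simp
  also have "\<dots> = pair S g \<phi>s"
    unfolding pair_def using int_\<Psi>u int_g u(2)
    by (intro integral_cong_AE) (auto elim: AE_mp)
  also have "\<dots> = t * P"
    using int_z int_\<phi> \<open>pair S z \<phi>s = 0\<close> unfolding g_def pair_def P_def
    by (simp add: algebra_simps)
  finally have pair_u: "pair S u \<phi>s = t * P" .
  have int_fu: "integrable (lebesgue_on S) (\<lambda>x. f (u x) * \<phi>s x)"
    using integrable_AP_comp_mult[OF AP(1) _ assms(8) int_u] \<open>Lp S p u\<close> unfolding Lp_def by blast
  have "htilde A bv c S p f \<phi> \<phi>s z t * P = pair S (Fop A bv c S f u) \<phi>s"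
    using assms(6) unfolding htilde_def u_def g_def P_def by simp
  also have "\<dots> = l * (t * P) - pair S (\<lambda>x. f (u x)) \<phi>s"
    using pair_Fop[OF _ integrable_Fop_mult[OF int_\<Psi>u int_\<phi>] int_fu int_u] adjoint u(1) pair_u
    by simp
  also have "\<dots> \<le> l * (t * P) - b * max (t * P) 0 + M * integral\<^sup>L (lebesgue_on S) \<phi>s"
    using pair_AP_comp_lower[OF AP assms(7,8) int_u int_fu] pair_u by simp
  also have "\<dots> = (l * t - b * max t 0 + M * integral\<^sup>L (lebesgue_on S) \<phi>s / P) * P"
    using assms(6) unfolding P_def by (simp add: algebra_simps max_mult_distrib_right)
  finally show ?thesis using assms(6) unfolding P_def by simp
qed

lemma affine_bound_eventually_le:
  fixes l b C K :: real
  assumes "0 < l" "l < b"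
  shows "\<exists>T. \<forall>t. T \<le> \<bar>t\<bar> \<longrightarrow> l * t - b * max t 0 + C \<le> - K"
proof (intro exI allI impI)
  fix t :: real
  assume T: "max ((K + C) / (b - l)) ((K + C) / l) \<le> \<bar>t\<bar>"
  show "l * t - b * max t 0 + C \<le> - K"
  proof (cases "t \<ge> 0")
    case True
    then have "K + C \<le> t * (b - l)" using T assms by (simp add: pos_divide_le_eq)
    then show ?thesis using True by (simp add: algebra_simps)
  next
    case False
    then have "K + C \<le> - t * l" using T assms by (simp add: pos_divide_le_eq)
    then show ?thesis using False by (simp add: algebra_simps)
  qed
qed

theorem proposition2p12:
  fixes \<Omega> :: "(real^'n) set"
    and A :: "real^'n \<Rightarrow> real^'n^'n" and bv :: "real^'n \<Rightarrow> real^'n" and c :: "real^'n \<Rightarrow> real"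
    and lam \<Lambda> p b B :: real and f :: "real \<Rightarrow> real"
    and \<phi>1 \<phi>1s :: "real^'n \<Rightarrow> real"
  assumes dom: "open \<Omega>" "bounded \<Omega>" "connected \<Omega>" "\<Omega> \<noteq> {}" "C11_boundary \<Omega>"
    and A_cont: "continuous_on (closure \<Omega>) A"
    and A_sym: "\<forall>x\<in>closure \<Omega>. transpose (A x) = A x"
    and ell: "0 < lam" "lam \<le> \<Lambda>"
      "\<forall>x\<in>closure \<Omega>. \<forall>\<xi>. lam * (\<xi> \<bullet> \<xi>) \<le> \<xi> \<bullet> (A x *v \<xi>) \<and> \<xi> \<bullet> (A x *v \<xi>) \<le> \<Lambda> * (\<xi> \<bullet> \<xi>)"
    and coeffs: "bv \<in> borel_measurable (lebesgue_on \<Omega>)" "c \<in> borel_measurable (lebesgue_on \<Omega>)"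
      "\<forall>x\<in>\<Omega>. norm (bv x) \<le> \<Lambda> \<and> \<bar>c x\<bar> \<le> \<Lambda>"
    and p: "p \<ge> real CARD('n)"
    and eig: "\<phi>1 \<in> Xsp \<Omega> p" "continuous_on \<Omega> \<phi>1" "\<forall>x\<in>\<Omega>. \<phi>1 x > 0"
      "AE x in lebesgue_on \<Omega>. Lop A bv c \<Omega> \<phi>1 x + principal_eig A bv c \<Omega> * \<phi>1 x = 0"
    and adj: "\<phi>1s \<in> borel_measurable (lebesgue_on \<Omega>)"
      "AE x in lebesgue_on \<Omega>. \<phi>1s x > 0"
      "\<forall>g. Lp \<Omega> p g \<longrightarrow> integrable (lebesgue_on \<Omega>) (\<lambda>x. g x * \<phi>1s x)"
      "\<forall>u\<in>Xsp \<Omega> p. pair \<Omega> (\<lambda>x. Lop A bv c \<Omega> u x + principal_eig A bv c \<Omega> * u x) \<phi>1s = 0"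
    and l1pos: "0 < principal_eig A bv c \<Omega>"
    and B: "\<forall>b' g. principal_eig A bv c \<Omega> < b' \<and> b' < B \<and> AP_cond b' g \<longrightarrow>
              bilip_homeo \<Omega> p (Psi A bv c \<Omega> g \<phi>1 \<phi>1s)"
    and f_lip: "\<exists>K. \<forall>x y. \<bar>f x - f y\<bar> \<le> K * \<bar>x - y\<bar>"
    and AP: "AP_cond b f"
    and b: "principal_eig A bv c \<Omega> < b" "b < B"
  shows "\<forall>K. \<exists>T. \<forall>z\<in>Zsp \<Omega> p \<phi>1s. \<forall>t. \<bar>t\<bar> \<ge> T \<longrightarrow>
           htilde A bv c \<Omega> p f \<phi>1 \<phi>1s z t \<le> - K"
  proof -
  let ?l = "principal_eig A bv c \<Omega>"
  have "0 < p"
    using p by (metis of_nat_0_less_iff zero_less_card_finite less_le_trans)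
  obtain M where M: "\<And>s. b * s - M \<le> f s" "\<And>s. - M \<le> f s"
    using AP unfolding AP_cond_def by auto
  have "\<Omega> \<in> lmeasurable"
    using lmeasurable_interior[OF dom(2)] interior_open[OF dom(1)] by simp
  have "Lp \<Omega> p \<phi>1" using eig(1) unfolding Xsp_def W2p_def by auto
  have "integrable (lebesgue_on \<Omega>) \<phi>1s"
    using adj(3) Lp_const[OF \<open>\<Omega> \<in> lmeasurable\<close>, of p 1] by auto
  have "pair \<Omega> \<phi>1 \<phi>1s > 0"
    using adj(2,3) eig(3) \<open>Lp \<Omega> p \<phi>1\<close> by (intro pair_pos dom(1,4) \<open>\<Omega> \<in> lmeasurable\<close>) auto
  moreover have "AE x in lebesgue_on \<Omega>. 0 \<le> \<phi>1s x" using adj(2) by eventually_elim simp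
  ultimately have bound: "htilde A bv c \<Omega> p f \<phi>1 \<phi>1s z t
      \<le> ?l * t - b * max t 0 + M * integral\<^sup>L (lebesgue_on \<Omega>) \<phi>1s / pair \<Omega> \<phi>1 \<phi>1s"
    if "z \<in> Zsp \<Omega> p \<phi>1s" for z t
    using B AP b \<open>0 < p\<close> \<open>Lp \<Omega> p \<phi>1\<close> adj(3,4) \<open>integrable (lebesgue_on \<Omega>) \<phi>1s\<close> M that
    by (intro htilde_le) auto
  show ?thesis
  proof
    fix K
    obtain T where "\<forall>t. T \<le> \<bar>t\<bar> \<longrightarrow>
        ?l * t - b * max t 0 + M * integral\<^sup>L (lebesgue_on \<Omega>) \<phi>1s / pair \<Omega> \<phi>1 \<phi>1s \<le> - K"
      using affine_bound_eventually_le[OF l1pos b(1)] by blast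
    then show "\<exists>T. \<forall>z\<in>Zsp \<Omega> p \<phi>1s. \<forall>t. T \<le> \<bar>t\<bar> \<longrightarrow> htilde A bv c \<Omega> p f \<phi>1 \<phi>1s z t \<le> - K"
      using bound by (meson order_trans)
  qed
qed

end
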